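(* Let $M_t=(\mathcal S,\mathcal A,\bar r_t,p_t,s_1)$, $t=1,\dots,T$, be time-homogeneous communicating MDPs on common finite state and action sets, each with diameter at most $D$. Define $V_T=\sum_{t=1}^{T-1}|\rho^*(M_{t+1})-\rho^*(M_t)|$, $V^r_T=\sum_{t=1}^{T-1}\max_{s,a}|\bar r_{t+1}(s,a)-\bar r_t(s,a)|$ and $V^p_T=\sum_{t=1}^{T-1}\max_{s,a}\|p_{t+1}(\cdot\mid s,a)-p_t(\cdot\mid s,a)\|_1$. Then \[V_T\le V^r_T+D\,V^p_T.\]
   Context: A (time-homogeneous) MDP $M=(\mathcal S,\mathcal A,\bar r,p,s_1)$ has mean rewards $\bar r(s,a)\in[0,1]$ and transition probabilities $p(\cdot\mid s,a)$. It is communicating if for any two states $s,s'$, starting in $s$ one can reach $s'$ with positive probability by choosing appropriate actions. Its diameter is $\max_{s\ne s'}\min_\pi\mathbb E[T(s'\mid s,\pi)]$, where $T(s'\mid s,\pi)$ is the first time $s'$ is reached when starting in $s$ and following the stationary policy $\pi:\mathcal S\to\mathcal A$. The average reward of a stationary policy is $\rho(M,\pi)=\lim_{n\to\infty}\frac1n\mathbb E[\sum_{t=1}^n r_t]$ and $\rho^*(M)=\max_\pi\rho(M,\pi)$. *)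

theory Defs
  imports "HOL-Analysis.Analysis"
begin

text \<open>An MDP on finite state type 's and action type 'a is given by mean rewards
  r s a, transition probabilities p s a s' and initial state s1.\<close>

definition is_mdp :: "('s::finite \<Rightarrow> 'a::finite \<Rightarrow> real) \<Rightarrow> ('s \<Rightarrow> 'a \<Rightarrow> 's \<Rightarrow> real) \<Rightarrow> bool" where
  "is_mdp r p \<longleftrightarrow> (\<forall>s a. 0 \<le> r s a \<and> r s a \<le> 1) \<and>
     (\<forall>s a s'. 0 \<le> p s a s') \<and> (\<forall>s a. (\<Sum>s'\<in>UNIV. p s a s') = 1)"

definition communicating :: "('s::finite \<Rightarrow> 'a::finite \<Rightarrow> 's \<Rightarrow> real) \<Rightarrow> bool" where
  "communicating p \<longleftrightarrow> (\<forall>s s'. (s, s') \<in> {(x, y). \<exists>a. p x a y > 0}\<^sup>*)"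

text \<open>Distribution of the state at time k+1 (k = 0,1,...) when following the stationary
  policy pol from state s1.\<close>
fun state_dist :: "('s::finite \<Rightarrow> 'a \<Rightarrow> 's \<Rightarrow> real) \<Rightarrow> ('s \<Rightarrow> 'a) \<Rightarrow> 's \<Rightarrow> nat \<Rightarrow> 's \<Rightarrow> real" where
  "state_dist p pol s1 0 x = (if x = s1 then 1 else 0)"
| "state_dist p pol s1 (Suc k) x = (\<Sum>y\<in>UNIV. state_dist p pol s1 k y * p y (pol y) x)"

definition avg_reward :: "('s::finite \<Rightarrow> 'a \<Rightarrow> real) \<Rightarrow> ('s \<Rightarrow> 'a \<Rightarrow> 's \<Rightarrow> real) \<Rightarrow> 's \<Rightarrow> ('s \<Rightarrow> 'a) \<Rightarrow> real" where
  "avg_reward r p s1 pol =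
     lim (\<lambda>n. (\<Sum>k<n. \<Sum>x\<in>UNIV. state_dist p pol s1 k x * r x (pol x)) / real n)"

definition opt_avg_reward :: "('s::finite \<Rightarrow> 'a::finite \<Rightarrow> real) \<Rightarrow> ('s \<Rightarrow> 'a \<Rightarrow> 's \<Rightarrow> real) \<Rightarrow> 's \<Rightarrow> real" where
  "opt_avg_reward r p s1 = Max (range (avg_reward r p s1))"

text \<open>survive p pol s s' k x = probability that the chain started in s under pol is in x at
  time k and has not visited s' at times 0..k.\<close>
fun survive :: "('s::finite \<Rightarrow> 'a \<Rightarrow> 's \<Rightarrow> real) \<Rightarrow> ('s \<Rightarrow> 'a) \<Rightarrow> 's \<Rightarrow> 's \<Rightarrow> nat \<Rightarrow> 's \<Rightarrow> real" where
  "survive p pol s s' 0 x = (if x = s \<and> x \<noteq> s' then 1 else 0)"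
| "survive p pol s s' (Suc k) x =
     (if x = s' then 0 else (\<Sum>y\<in>UNIV. survive p pol s s' k y * p y (pol y) x))"

text \<open>Expected hitting time E[T(s' | s, pol)] = sum_{k>=0} P(T > k), valued in [0, infinity].\<close>
definition exp_hit_time :: "('s::finite \<Rightarrow> 'a \<Rightarrow> 's \<Rightarrow> real) \<Rightarrow> ('s \<Rightarrow> 'a) \<Rightarrow> 's \<Rightarrow> 's \<Rightarrow> ennreal" where
  "exp_hit_time p pol s s' = (\<Sum>k. ennreal (\<Sum>x\<in>UNIV. survive p pol s s' k x))"

definition diameter :: "('s::finite \<Rightarrow> 'a::finite \<Rightarrow> 's \<Rightarrow> real) \<Rightarrow> ennreal" where
  "diameter p = (SUP ss\<in>{(s, s'). s \<noteq> s'}. INF pol. exp_hit_time p pol (fst ss) (snd ss))"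

end

theory Submission
  imports Defs
begin

text \<open>
  Compare consecutive MDPs \<open>M1 = (r1, p1)\<close> and \<open>M2 = (r2, p2)\<close>. For a discount factor
  \<open>\<gamma> < 1\<close> let \<open>V\<close> solve the discounted optimality equation of \<open>M1\<close>. Since \<open>V\<close> is
  \<open>\<gamma>\<close>-superharmonic, following a policy that reaches \<open>s'\<close> from \<open>s\<close> in expected time at most \<open>D\<close>
  shows \<open>V s' - V s \<le> D\<close>; averaging the equation over the stationary distribution of an optimal
  policy then gives \<open>(1 - \<gamma>) V \<le> \<rho>*(M1) + (1 - \<gamma>) D\<close>. Because the span of \<open>V\<close> is at most \<open>D\<close>,
  replacing \<open>p1\<close> by \<open>p2\<close> changes \<open>\<Sum>y. p x a y * V y\<close> by at most \<open>D |p2 - p1|\<^sub>1\<close>, so every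
  stationary policy of \<open>M2\<close> satisfies the Bellman inequality
  \<open>r2 + P2 V \<le> V + \<rho>*(M1) + (1 - \<gamma>) D + |r2 - r1|\<^sub>\<infinity> + D |p2 - p1|\<^sub>1\<close>.
  The average reward of a stationary policy is its mean reward under a stationary distribution,
  the Cesaro limit of the powers of its transition matrix, and averaging the inequality against
  that distribution cancels \<open>V\<close>. Letting \<open>\<gamma> \<rightarrow> 1\<close> gives
  \<open>\<rho>*(M2) \<le> \<rho>*(M1) + |r2 - r1|\<^sub>\<infinity> + D |p2 - p1|\<^sub>1\<close>, and by symmetry the same bound holds
  for \<open>|\<rho>*(M2) - \<rho>*(M1)|\<close>; summing over \<open>t\<close> gives the theorem.
\<close>

section \<open>Powers and Cesaro averages of stochastic matrices\<close>

definition stochastic :: "('s::finite \<Rightarrow> 's \<Rightarrow> real) \<Rightarrow> bool" where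
  "stochastic P \<longleftrightarrow> (\<forall>x y. 0 \<le> P x y) \<and> (\<forall>x. (\<Sum>y\<in>UNIV. P x y) = 1)"

lemma sum_prob_mult_le:
  assumes "\<And>x. 0 \<le> q x" and "(\<Sum>x\<in>UNIV. q x) = 1" and "\<And>x. f x \<le> c"
  shows "(\<Sum>x\<in>UNIV. q x * f x) \<le> (c :: real)"
proof -
  have "(\<Sum>x\<in>UNIV. q x * f x) \<le> (\<Sum>x\<in>UNIV. q x * c)"
    by (intro sum_mono mult_left_mono assms)
  also have "\<dots> = c"
    using assms(2) by (simp add: sum_distrib_right[symmetric])
  finally show ?thesis .
qed

lemma sum_prob_mult_ge:
  assumes "\<And>x. 0 \<le> q x" and "(\<Sum>x\<in>UNIV. q x) = 1" and "\<And>x. c \<le> f x"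
  shows "(c :: real) \<le> (\<Sum>x\<in>UNIV. q x * f x)"
proof -
  have "c = (\<Sum>x\<in>UNIV. q x * c)"
    using assms(2) by (simp add: sum_distrib_right[symmetric])
  also have "\<dots> \<le> (\<Sum>x\<in>UNIV. q x * f x)"
    by (intro sum_mono mult_left_mono assms)
  finally show ?thesis .
qed

fun mat_pow :: "('s::finite \<Rightarrow> 's \<Rightarrow> real) \<Rightarrow> nat \<Rightarrow> 's \<Rightarrow> 's \<Rightarrow> real" where
  "mat_pow P 0 x y = of_bool (x = y)"
| "mat_pow P (Suc k) x y = (\<Sum>z\<in>UNIV. mat_pow P k x z * P z y)"

lemma mat_pow_nonneg: "stochastic P \<Longrightarrow> 0 \<le> mat_pow P k x y"
  by (induction k arbitrary: y) (auto simp: stochastic_def intro!: sum_nonneg)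

lemma mat_pow_row_sum: "stochastic P \<Longrightarrow> (\<Sum>y\<in>UNIV. mat_pow P k x y) = 1"
proof (induction k)
  case (Suc k)
  have "(\<Sum>y\<in>UNIV. mat_pow P (Suc k) x y) = (\<Sum>z\<in>UNIV. \<Sum>y\<in>UNIV. mat_pow P k x z * P z y)"
    unfolding mat_pow.simps by (rule sum.swap)
  also have "\<dots> = (\<Sum>z\<in>UNIV. mat_pow P k x z * (\<Sum>y\<in>UNIV. P z y))"
    by (simp add: sum_distrib_left)
  finally show ?case using Suc by (simp add: stochastic_def)
qed simp

lemma mat_pow_le_1: "stochastic P \<Longrightarrow> mat_pow P k x y \<le> 1"
  using member_le_sum[of y UNIV "mat_pow P k x"] mat_pow_nonneg mat_pow_row_sum by fastforce

lemma abs_mat_pow_diff_le_1: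
  assumes "stochastic P"
  shows "\<bar>mat_pow P i x y - mat_pow P j x y\<bar> \<le> 1"
  using mat_pow_nonneg[OF assms, of i x y] mat_pow_le_1[OF assms, of i x y]
    mat_pow_nonneg[OF assms, of j x y] mat_pow_le_1[OF assms, of j x y] by linarith

lemma mat_pow_add: "mat_pow P (i + k) x y = (\<Sum>z\<in>UNIV. mat_pow P i x z * mat_pow P k z y)"
proof (induction k arbitrary: y)
  case (Suc k)
  have "mat_pow P (i + Suc k) x y = (\<Sum>w\<in>UNIV. \<Sum>z\<in>UNIV. mat_pow P i x z * mat_pow P k z w * P w y)"
    by (simp add: Suc sum_distrib_right)
  also have "\<dots> = (\<Sum>z\<in>UNIV. mat_pow P i x z * mat_pow P (Suc k) z y)"
    by (subst sum.swap) (simp add: sum_distrib_left mult.assoc)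
  finally show ?case .
qed simp

lemma mat_pow_Suc_left: "mat_pow P (Suc k) x y = (\<Sum>z\<in>UNIV. P x z * mat_pow P k z y)"
  using mat_pow_add[of P 1 k x y] by simp

lemma abs_sum_mat_pow_shift_diff_le:
  assumes "stochastic P"
  shows "\<bar>(\<Sum>i<n. mat_pow P (i + k) x y) - (\<Sum>i<n. mat_pow P i x y)\<bar> \<le> real k"
proof (induction k)
  case (Suc k)
  have "(\<Sum>i<n. mat_pow P (i + Suc k) x y) - (\<Sum>i<n. mat_pow P (i + k) x y)
        = (\<Sum>i<n. mat_pow P (Suc i + k) x y - mat_pow P (i + k) x y)"
    by (simp only: sum_subtractf add_Suc add_Suc_right)
  also have "\<dots> = mat_pow P (n + k) x y - mat_pow P (0 + k) x y"
    by (rule sum_lessThan_telescope)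
  finally show ?case using Suc abs_mat_pow_diff_le_1[OF assms, of "n + k" x y k] by simp
qed simp

lemma mat_pow_div_tendsto_0:
  assumes "stochastic P"
  shows "(\<lambda>n. (mat_pow P n x y - mat_pow P 0 x y) / real n) \<longlonglongrightarrow> 0"
proof (rule Lim_null_comparison[OF _ lim_1_over_n])
  show "\<forall>\<^sub>F n in sequentially. norm ((mat_pow P n x y - mat_pow P 0 x y) / real n) \<le> 1 / real n"
    using abs_mat_pow_diff_le_1[OF assms]
    by (intro always_eventually allI) (simp add: abs_div_pos divide_right_mono del: mat_pow.simps)
qed

lemma mat_pow_mult_fixed:
  assumes "\<And>x y. (\<Sum>z\<in>UNIV. P x z * Q z y) = Q x y"
  shows "(\<Sum>z\<in>UNIV. mat_pow P k x z * Q z y) = Q x y"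
proof (induction k arbitrary: x)
  case (Suc k)
  have "(\<Sum>z\<in>UNIV. mat_pow P (Suc k) x z * Q z y) = (\<Sum>z\<in>UNIV. \<Sum>w\<in>UNIV. P x w * mat_pow P k w z * Q z y)"
    by (simp only: mat_pow_Suc_left sum_distrib_right)
  also have "\<dots> = (\<Sum>w\<in>UNIV. \<Sum>z\<in>UNIV. P x w * mat_pow P k w z * Q z y)"
    by (rule sum.swap)
  also have "\<dots> = (\<Sum>w\<in>UNIV. P x w * Q w y)"
    by (simp only: mult.assoc sum_distrib_left[symmetric] Suc)
  also have "\<dots> = Q x y"
    by (rule assms)
  finally show ?case .
qed simp

definition cesaro_avg :: "('s::finite \<Rightarrow> 's \<Rightarrow> real) \<Rightarrow> nat \<Rightarrow> 's \<Rightarrow> 's \<Rightarrow> real" where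
  "cesaro_avg P n x y = (\<Sum>k<n. mat_pow P k x y) / real n"

lemma cesaro_avg_nonneg: "stochastic P \<Longrightarrow> 0 \<le> cesaro_avg P n x y"
  unfolding cesaro_avg_def by (auto intro!: divide_nonneg_nonneg sum_nonneg mat_pow_nonneg)

lemma cesaro_avg_row_sum:
  assumes "stochastic P" and "n > 0"
  shows "(\<Sum>y\<in>UNIV. cesaro_avg P n x y) = 1"
proof -
  have "(\<Sum>y\<in>UNIV. \<Sum>k<n. mat_pow P k x y) = (\<Sum>k<n. \<Sum>y\<in>UNIV. mat_pow P k x y)"
    by (rule sum.swap)
  then show ?thesis
    using assms unfolding cesaro_avg_def by (simp add: sum_divide_distrib[symmetric] mat_pow_row_sum)
qed

lemma cesaro_avg_le_1:
  assumes "stochastic P"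
  shows "cesaro_avg P n x y \<le> 1"
proof (cases "n = 0")
  case False
  have "cesaro_avg P n x y \<le> (\<Sum>y\<in>UNIV. cesaro_avg P n x y)"
    by (rule member_le_sum) (simp_all add: cesaro_avg_nonneg[OF assms])
  with False show ?thesis using cesaro_avg_row_sum[OF assms] by simp
qed (simp add: cesaro_avg_def)

lemma sum_mat_pow_Suc:
  "(\<Sum>k<n. mat_pow P (Suc k) x y) = (\<Sum>k<n. mat_pow P k x y) + (mat_pow P n x y - mat_pow P 0 x y)"
  by (induction n) (simp_all del: mat_pow.simps)

lemma cesaro_avg_mult_right:
  "(\<Sum>z\<in>UNIV. cesaro_avg P n x z * P z y) = cesaro_avg P n x y + (mat_pow P n x y - mat_pow P 0 x y) / real n"
proof -
  have "(\<Sum>z\<in>UNIV. cesaro_avg P n x z * P z y) = (\<Sum>z\<in>UNIV. \<Sum>k<n. mat_pow P k x z * P z y) / real n"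
    unfolding cesaro_avg_def by (simp add: sum_divide_distrib sum_distrib_right)
  also have "(\<Sum>z\<in>UNIV. \<Sum>k<n. mat_pow P k x z * P z y) = (\<Sum>k<n. mat_pow P (Suc k) x y)"
    unfolding mat_pow.simps(2) by (rule sum.swap)
  finally show ?thesis
    unfolding sum_mat_pow_Suc cesaro_avg_def by (simp add: add_divide_distrib del: mat_pow.simps)
qed

lemma cesaro_avg_mult_left:
  "(\<Sum>z\<in>UNIV. P x z * cesaro_avg P n z y) = cesaro_avg P n x y + (mat_pow P n x y - mat_pow P 0 x y) / real n"
proof -
  have "(\<Sum>z\<in>UNIV. P x z * cesaro_avg P n z y) = (\<Sum>z\<in>UNIV. \<Sum>k<n. P x z * mat_pow P k z y) / real n"
    unfolding cesaro_avg_def by (simp add: sum_divide_distrib sum_distrib_left)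
  also have "(\<Sum>z\<in>UNIV. \<Sum>k<n. P x z * mat_pow P k z y) = (\<Sum>k<n. mat_pow P (Suc k) x y)"
    unfolding mat_pow_Suc_left by (rule sum.swap)
  finally show ?thesis
    unfolding sum_mat_pow_Suc cesaro_avg_def by (simp add: add_divide_distrib del: mat_pow.simps)
qed

lemma cesaro_avg_mult_fixed:
  assumes "\<And>x y. (\<Sum>z\<in>UNIV. P x z * Q z y) = Q x y" and "n > 0"
  shows "(\<Sum>z\<in>UNIV. cesaro_avg P n x z * Q z y) = Q x y"
proof -
  have "(\<Sum>z\<in>UNIV. cesaro_avg P n x z * Q z y) = (\<Sum>z\<in>UNIV. \<Sum>k<n. mat_pow P k x z * Q z y) / real n"
    unfolding cesaro_avg_def by (simp add: sum_divide_distrib sum_distrib_right del: mat_pow.simps)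
  also have "(\<Sum>z\<in>UNIV. \<Sum>k<n. mat_pow P k x z * Q z y) = (\<Sum>k<n. \<Sum>z\<in>UNIV. mat_pow P k x z * Q z y)"
    by (rule sum.swap)
  finally show ?thesis
    using assms by (simp add: mat_pow_mult_fixed del: mat_pow.simps)
qed

lemma cesaro_avg_mult_cesaro_avg:
  "(\<Sum>z\<in>UNIV. cesaro_avg P n x z * cesaro_avg P m z y)
     = (\<Sum>k<m. \<Sum>i<n. mat_pow P (i + k) x y) / (real n * real m)"
proof -
  have "(\<Sum>z\<in>UNIV. cesaro_avg P n x z * cesaro_avg P m z y)
      = (\<Sum>z\<in>UNIV. \<Sum>i<n. \<Sum>k<m. mat_pow P i x z * mat_pow P k z y) / (real n * real m)"
    by (simp add: cesaro_avg_def sum_product sum_divide_distrib del: mat_pow.simps)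
  also have "(\<Sum>z\<in>UNIV. \<Sum>i<n. \<Sum>k<m. mat_pow P i x z * mat_pow P k z y)
      = (\<Sum>i<n. \<Sum>k<m. \<Sum>z\<in>UNIV. mat_pow P i x z * mat_pow P k z y)"
    by (subst sum.swap) (intro sum.cong refl sum.swap)
  also have "\<dots> = (\<Sum>k<m. \<Sum>i<n. mat_pow P (i + k) x y)"
    unfolding mat_pow_add[symmetric] by (rule sum.swap)
  finally show ?thesis .
qed

text \<open>Writing \<open>A\<^sub>n\<close> for \<open>cesaro_avg P n\<close>: if \<open>P Q = Q\<close> then \<open>A\<^sub>n Q = Q\<close>, hence
  \<open>A\<^sub>n - Q = (A\<^sub>n - A\<^sub>n A\<^sub>m) + A\<^sub>n (A\<^sub>m - Q)\<close>, and the first term is \<open>O(m/n)\<close>.\<close>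

lemma abs_cesaro_avg_diff_mult_le:
  assumes "stochastic P" and "n > 0" and "m > 0"
  shows "\<bar>cesaro_avg P n x y - (\<Sum>z\<in>UNIV. cesaro_avg P n x z * cesaro_avg P m z y)\<bar> \<le> real m / real n"
proof -
  define S where "S = (\<Sum>k<m. (\<Sum>i<n. mat_pow P i x y) - (\<Sum>i<n. mat_pow P (i + k) x y))"
  have "cesaro_avg P n x y = (\<Sum>k<m. \<Sum>i<n. mat_pow P i x y) / (real n * real m)"
    using assms(3) by (simp add: cesaro_avg_def del: mat_pow.simps)
  then have eq: "cesaro_avg P n x y - (\<Sum>z\<in>UNIV. cesaro_avg P n x z * cesaro_avg P m z y)
      = S / (real n * real m)"
    unfolding cesaro_avg_mult_cesaro_avg S_def
    by (simp add: sum_subtractf diff_divide_distrib del: mat_pow.simps)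
  have "\<bar>S\<bar> \<le> (\<Sum>k<m. real m)"
    unfolding S_def
  proof (intro order.trans[OF sum_abs] sum_mono)
    fix k assume "k \<in> {..<m}"
    then show "\<bar>(\<Sum>i<n. mat_pow P i x y) - (\<Sum>i<n. mat_pow P (i + k) x y)\<bar> \<le> real m"
      using abs_sum_mat_pow_shift_diff_le[OF assms(1), where n = n and k = k and x = x and y = y]
      by (simp add: abs_minus_commute del: mat_pow.simps)
  qed
  then have "\<bar>S\<bar> / (real n * real m) \<le> (real m * real m) / (real n * real m)"
    by (intro divide_right_mono) simp_all
  with eq show ?thesis
    using assms(3) by (simp add: abs_divide)
qed

lemma abs_cesaro_avg_diff_fixed_le:
  assumes "stochastic P" and PQ: "\<And>x y. (\<Sum>z\<in>UNIV. P x z * Q z y) = Q x y"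
    and "n > 0" and "m > 0" and c: "\<And>z. \<bar>cesaro_avg P m z y - Q z y\<bar> \<le> c"
  shows "\<bar>cesaro_avg P n x y - Q x y\<bar> \<le> real m / real n + c"
proof -
  have "\<bar>(\<Sum>z\<in>UNIV. cesaro_avg P n x z * cesaro_avg P m z y) - Q x y\<bar>
      = \<bar>\<Sum>z\<in>UNIV. cesaro_avg P n x z * (cesaro_avg P m z y - Q z y)\<bar>"
    using cesaro_avg_mult_fixed[of P Q n x y] PQ \<open>n > 0\<close>
    by (simp add: sum_subtractf right_diff_distrib)
  also have "\<dots> \<le> (\<Sum>z\<in>UNIV. cesaro_avg P n x z * c)"
    by (intro order.trans[OF sum_abs] sum_mono)
      (simp add: abs_mult cesaro_avg_nonneg[OF assms(1)] c mult_left_mono)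
  also have "\<dots> = c"
    using cesaro_avg_row_sum[OF assms(1) \<open>n > 0\<close>] by (simp add: sum_distrib_right[symmetric])
  finally show ?thesis
    using abs_cesaro_avg_diff_mult_le[OF assms(1) \<open>n > 0\<close> \<open>m > 0\<close>, of x y] by linarith
qed

lemma cesaro_avg_convergent_subseq:
  assumes "stochastic P"
  obtains r Q where "strict_mono r" and "\<And>x y. (\<lambda>j. cesaro_avg P (r j) x y) \<longlonglongrightarrow> Q x y"
proof -
  define F :: "nat \<Rightarrow> real^'a^'a" where "F n = (\<chi> x. \<chi> y. cesaro_avg P n x y)" for n
  have "norm (F n) \<le> real CARD('a) * real CARD('a)" for n
  proof -
    have "norm (F n) \<le> (\<Sum>x\<in>UNIV. norm (F n $ x))"
      by (simp add: norm_vec_def L2_set_le_sum)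
    also have "\<dots> \<le> (\<Sum>x\<in>UNIV. \<Sum>y\<in>UNIV. \<bar>F n $ x $ y\<bar>)"
      by (intro sum_mono norm_le_l1_cart)
    also have "\<dots> \<le> (\<Sum>x\<in>(UNIV::'a set). \<Sum>y\<in>(UNIV::'a set). 1::real)"
      unfolding F_def using cesaro_avg_nonneg[OF assms] cesaro_avg_le_1[OF assms]
      by (intro sum_mono) auto
    finally show ?thesis by simp
  qed
  then have "bounded (range F)"
    unfolding bounded_iff by blast
  then obtain l r where "strict_mono r" and l: "(F \<circ> r) \<longlonglongrightarrow> l"
    using bounded_imp_convergent_subsequence by blast
  moreover have "(\<lambda>j. cesaro_avg P (r j) x y) \<longlonglongrightarrow> l $ x $ y" for x y
    using tendsto_vec_nth[OF tendsto_vec_nth[OF l, of x], of y] by (simp add: F_def)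
  ultimately show ?thesis
    using that[of r "\<lambda>x y. l $ x $ y"] by blast
qed

lemma cesaro_avg_subseq_limit:
  assumes P: "stochastic P" and r: "strict_mono r"
    and lim: "\<And>x y. (\<lambda>j. cesaro_avg P (r j) x y) \<longlonglongrightarrow> Q x y"
  shows "stochastic Q"
    and "\<And>x y. (\<Sum>z\<in>UNIV. Q x z * P z y) = Q x y"
    and "\<And>x y. (\<Sum>z\<in>UNIV. P x z * Q z y) = Q x y"
proof -
  have err: "(\<lambda>j. (mat_pow P (r j) x y - mat_pow P 0 x y) / real (r j)) \<longlonglongrightarrow> 0" for x y
    using LIMSEQ_subseq_LIMSEQ[OF mat_pow_div_tendsto_0[OF P] r] by (simp add: o_def)
  show "(\<Sum>z\<in>UNIV. Q x z * P z y) = Q x y" for x y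
  proof (rule LIMSEQ_unique)
    show "(\<lambda>j. \<Sum>z\<in>UNIV. cesaro_avg P (r j) x z * P z y) \<longlonglongrightarrow> (\<Sum>z\<in>UNIV. Q x z * P z y)"
      by (intro tendsto_sum tendsto_mult_right lim)
    show "(\<lambda>j. \<Sum>z\<in>UNIV. cesaro_avg P (r j) x z * P z y) \<longlonglongrightarrow> Q x y"
      using tendsto_add[OF lim err] unfolding cesaro_avg_mult_right by simp
  qed
  show "(\<Sum>z\<in>UNIV. P x z * Q z y) = Q x y" for x y
  proof (rule LIMSEQ_unique)
    show "(\<lambda>j. \<Sum>z\<in>UNIV. P x z * cesaro_avg P (r j) z y) \<longlonglongrightarrow> (\<Sum>z\<in>UNIV. P x z * Q z y)"
      by (intro tendsto_sum tendsto_mult_left lim)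
    show "(\<lambda>j. \<Sum>z\<in>UNIV. P x z * cesaro_avg P (r j) z y) \<longlonglongrightarrow> Q x y"
      using tendsto_add[OF lim err] unfolding cesaro_avg_mult_left by simp
  qed
  have "0 \<le> Q x y" for x y
    by (rule LIMSEQ_le_const[OF lim]) (auto intro: cesaro_avg_nonneg[OF P])
  moreover have "(\<Sum>y\<in>UNIV. Q x y) = 1" for x
  proof (rule LIMSEQ_unique)
    show "(\<lambda>j. \<Sum>y\<in>UNIV. cesaro_avg P (r j) x y) \<longlonglongrightarrow> (\<Sum>y\<in>UNIV. Q x y)"
      by (intro tendsto_sum lim)
    have "(\<Sum>y\<in>UNIV. cesaro_avg P (r j) x y) = 1" if "j \<ge> 1" for j
      using cesaro_avg_row_sum[OF P] seq_suble[OF r, of j] that by simp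
    then show "(\<lambda>j. \<Sum>y\<in>UNIV. cesaro_avg P (r j) x y) \<longlonglongrightarrow> 1"
      by (intro tendsto_eventually eventually_sequentiallyI)
  qed
  ultimately show "stochastic Q"
    unfolding stochastic_def by blast
qed

text \<open>By compactness some subsequence of the Cesaro averages converges; its limit \<open>Q\<close> satisfies
  \<open>P Q = Q\<close>, and the estimate above then upgrades this to convergence of the whole sequence.\<close>

lemma cesaro_avg_tendsto:
  assumes P: "stochastic P"
  obtains Q where "stochastic Q" and "\<And>x y. (\<Sum>z\<in>UNIV. Q x z * P z y) = Q x y"
    and "\<And>x y. (\<lambda>n. cesaro_avg P n x y) \<longlonglongrightarrow> Q x y"
proof -
  obtain r Q where r: "strict_mono r" and lim: "\<And>x y. (\<lambda>j. cesaro_avg P (r j) x y) \<longlonglongrightarrow> Q x y"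
    using cesaro_avg_convergent_subseq[OF P] by blast
  note Q = cesaro_avg_subseq_limit[OF P r lim]
  have "(\<lambda>n. cesaro_avg P n x y) \<longlonglongrightarrow> Q x y" for x y
  proof (rule LIMSEQ_I)
    fix e :: real assume "0 < e"
    have "\<forall>\<^sub>F j in sequentially. \<forall>z. dist (cesaro_avg P (r j) z y) (Q z y) < e / 2"
      using lim \<open>0 < e\<close> by (intro eventually_all_finite tendstoD) simp_all
    then obtain j0 where j0: "\<And>j z. j \<ge> j0 \<Longrightarrow> \<bar>cesaro_avg P (r j) z y - Q z y\<bar> < e / 2"
      unfolding eventually_sequentially dist_real_def by blast
    define m where "m = r (Suc j0)"
    have "m > 0"
      using seq_suble[OF r, of "Suc j0"] unfolding m_def by simp
    have m: "\<bar>cesaro_avg P m z y - Q z y\<bar> \<le> e / 2" for z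
      using j0[of "Suc j0" z] unfolding m_def by simp
    obtain N :: nat where N: "real N > 2 * real m / e"
      using reals_Archimedean2 by blast
    show "\<exists>N. \<forall>n\<ge>N. norm (cesaro_avg P n x y - Q x y) < e"
    proof (intro exI allI impI)
      fix n assume "n \<ge> Suc N"
      then have "n > 0" and "2 * real m / e < real n"
        using N by simp_all
      then have "real m / real n < e / 2"
        using \<open>0 < e\<close> by (simp add: field_simps)
      moreover have "\<bar>cesaro_avg P n x y - Q x y\<bar> \<le> real m / real n + e / 2"
        by (rule abs_cesaro_avg_diff_fixed_le[of P Q, OF P Q(3) \<open>n > 0\<close> \<open>m > 0\<close> m])
      ultimately show "norm (cesaro_avg P n x y - Q x y) < e"
        unfolding real_norm_def by linarith
    qed
  qed
  then show ?thesis
    by (rule that[OF Q(1,2)])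
qed

section \<open>Average reward of a stationary policy\<close>

lemma state_dist_eq_mat_pow: "state_dist p pol s k x = mat_pow (\<lambda>x y. p x (pol x) y) k s x"
  by (induction k arbitrary: x) auto

lemma stochastic_policy_matrix: "is_mdp r p \<Longrightarrow> stochastic (\<lambda>x y. p x (pol x) y)"
  unfolding is_mdp_def stochastic_def by auto

lemma avg_reward_stationary:
  assumes "is_mdp r p"
  obtains q where "\<And>x. 0 \<le> q x" and "(\<Sum>x\<in>UNIV. q x) = 1"
    and "\<And>y. (\<Sum>x\<in>UNIV. q x * p x (pol x) y) = q y"
    and "avg_reward r p s pol = (\<Sum>x\<in>UNIV. q x * r x (pol x))"
proof -
  define P where "P = (\<lambda>x y. p x (pol x) y)"
  obtain Q where Q: "stochastic Q" "\<And>x y. (\<Sum>z\<in>UNIV. Q x z * P z y) = Q x y"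
    and lim: "\<And>x y. (\<lambda>n. cesaro_avg P n x y) \<longlonglongrightarrow> Q x y"
    using cesaro_avg_tendsto[OF stochastic_policy_matrix[OF assms]] unfolding P_def by blast
  have "(\<Sum>k<n. \<Sum>x\<in>UNIV. state_dist p pol s k x * r x (pol x)) / real n
        = (\<Sum>x\<in>UNIV. cesaro_avg P n s x * r x (pol x))" for n
  proof -
    have "(\<Sum>k<n. \<Sum>x\<in>UNIV. state_dist p pol s k x * r x (pol x))
        = (\<Sum>x\<in>UNIV. \<Sum>k<n. mat_pow P k s x * r x (pol x))"
      unfolding state_dist_eq_mat_pow P_def by (rule sum.swap)
    then show ?thesis
      unfolding cesaro_avg_def by (simp add: sum_divide_distrib sum_distrib_right)
  qed
  moreover have "(\<lambda>n. \<Sum>x\<in>UNIV. cesaro_avg P n s x * r x (pol x)) \<longlonglongrightarrow> (\<Sum>x\<in>UNIV. Q s x * r x (pol x))"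
    by (intro tendsto_sum tendsto_mult_right lim)
  ultimately have "avg_reward r p s pol = (\<Sum>x\<in>UNIV. Q s x * r x (pol x))"
    unfolding avg_reward_def by (simp add: limI)
  moreover have "(\<Sum>x\<in>UNIV. Q s x * p x (pol x) y) = Q s y" for y
    using Q(2) unfolding P_def .
  ultimately show ?thesis
    using that[of "Q s"] Q(1) unfolding stochastic_def by blast
qed

lemma sum_stationary_mult:
  assumes "\<And>y. (\<Sum>x\<in>UNIV. q x * P x y) = q y"
  shows "(\<Sum>x\<in>UNIV. q x * (\<Sum>y\<in>UNIV. P x y * f y)) = (\<Sum>y\<in>UNIV. q y * (f y :: real))"
proof -
  have "(\<Sum>x\<in>UNIV. q x * (\<Sum>y\<in>UNIV. P x y * f y)) = (\<Sum>x\<in>UNIV. \<Sum>y\<in>UNIV. q x * P x y * f y)"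
    by (simp add: sum_distrib_left mult.assoc)
  also have "\<dots> = (\<Sum>y\<in>UNIV. \<Sum>x\<in>UNIV. q x * P x y * f y)"
    by (rule sum.swap)
  also have "\<dots> = (\<Sum>y\<in>UNIV. q y * f y)"
    by (simp add: sum_distrib_right[symmetric] assms)
  finally show ?thesis .
qed

text \<open>Averaging a Bellman-type inequality over the stationary distribution of \<open>pol\<close> cancels the
  bias term \<open>V\<close>.\<close>

lemma avg_reward_stationary_bellman:
  assumes "is_mdp r p"
  obtains q where "\<And>x. 0 \<le> q x" and "(\<Sum>x\<in>UNIV. q x) = 1"
    and "(\<Sum>x\<in>UNIV. q x * (r x (pol x) + (\<Sum>y\<in>UNIV. p x (pol x) y * V y) - V x)) = avg_reward r p s pol"
proof -
  obtain q where q: "\<And>x. 0 \<le> q x" "(\<Sum>x\<in>UNIV. q x) = 1"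
    "\<And>y. (\<Sum>x\<in>UNIV. q x * p x (pol x) y) = q y"
    "avg_reward r p s pol = (\<Sum>x\<in>UNIV. q x * r x (pol x))"
    using avg_reward_stationary[OF assms] by blast
  have "(\<Sum>x\<in>UNIV. q x * (r x (pol x) + (\<Sum>y\<in>UNIV. p x (pol x) y * V y) - V x))
      = (\<Sum>x\<in>UNIV. q x * r x (pol x)) + ((\<Sum>x\<in>UNIV. q x * (\<Sum>y\<in>UNIV. p x (pol x) y * V y)) - (\<Sum>x\<in>UNIV. q x * V x))"
    by (simp add: algebra_simps sum.distrib sum_subtractf)
  also have "\<dots> = avg_reward r p s pol"
    using q(4) sum_stationary_mult[of q "\<lambda>x y. p x (pol x) y", OF q(3)] by simp
  finally show ?thesis
    using that q(1,2) by blast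
qed

lemma avg_reward_le_of_bellman_ineq:
  assumes "is_mdp r p" and "\<And>x. r x (pol x) + (\<Sum>y\<in>UNIV. p x (pol x) y * V y) \<le> V x + c"
  shows "avg_reward r p s pol \<le> c"
proof -
  obtain q where q: "\<And>x. 0 \<le> q x" "(\<Sum>x\<in>UNIV. q x) = 1"
    "(\<Sum>x\<in>UNIV. q x * (r x (pol x) + (\<Sum>y\<in>UNIV. p x (pol x) y * V y) - V x)) = avg_reward r p s pol"
    using avg_reward_stationary_bellman[OF assms(1), where pol = pol and V = V and s = s] by blast
  have "(\<Sum>x\<in>UNIV. q x * (r x (pol x) + (\<Sum>y\<in>UNIV. p x (pol x) y * V y) - V x)) \<le> c"
    using q(1,2) by (rule sum_prob_mult_le) (use assms(2) in \<open>simp add: algebra_simps\<close>)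
  with q(3) show ?thesis
    by simp
qed

lemma avg_reward_ge_of_bellman_ineq:
  assumes "is_mdp r p" and "\<And>x. V x + c \<le> r x (pol x) + (\<Sum>y\<in>UNIV. p x (pol x) y * V y)"
  shows "c \<le> avg_reward r p s pol"
proof -
  obtain q where q: "\<And>x. 0 \<le> q x" "(\<Sum>x\<in>UNIV. q x) = 1"
    "(\<Sum>x\<in>UNIV. q x * (r x (pol x) + (\<Sum>y\<in>UNIV. p x (pol x) y * V y) - V x)) = avg_reward r p s pol"
    using avg_reward_stationary_bellman[OF assms(1), where pol = pol and V = V and s = s] by blast
  have "c \<le> (\<Sum>x\<in>UNIV. q x * (r x (pol x) + (\<Sum>y\<in>UNIV. p x (pol x) y * V y) - V x))"
    using q(1,2) by (rule sum_prob_mult_ge) (use assms(2) in \<open>simp add: algebra_simps\<close>)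
  with q(3) show ?thesis
    by simp
qed

section \<open>The discounted optimality equation\<close>

definition disc_bellman ::
    "('s::finite \<Rightarrow> 'a::finite \<Rightarrow> real) \<Rightarrow> ('s \<Rightarrow> 'a \<Rightarrow> 's \<Rightarrow> real) \<Rightarrow> real \<Rightarrow> ('s \<Rightarrow> real) \<Rightarrow> 's \<Rightarrow> real" where
  "disc_bellman r p \<gamma> v x = Max (range (\<lambda>a. r x a + \<gamma> * (\<Sum>y\<in>UNIV. p x a y * v y)))"

lemma disc_bellman_ge: "r x a + \<gamma> * (\<Sum>y\<in>UNIV. p x a y * v y) \<le> disc_bellman r p \<gamma> v x"
  unfolding disc_bellman_def by (rule Max_ge) auto

lemma disc_bellman_le_iff:
  "disc_bellman r p \<gamma> v x \<le> c \<longleftrightarrow> (\<forall>a. r x a + \<gamma> * (\<Sum>y\<in>UNIV. p x a y * v y) \<le> c)"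
  unfolding disc_bellman_def by (subst Max_le_iff) auto

lemma disc_bellman_attained:
  obtains a where "disc_bellman r p \<gamma> v x = r x a + \<gamma> * (\<Sum>y\<in>UNIV. p x a y * v y)"
proof -
  have "disc_bellman r p \<gamma> v x \<in> range (\<lambda>a. r x a + \<gamma> * (\<Sum>y\<in>UNIV. p x a y * v y))"
    unfolding disc_bellman_def by (rule Max_in) auto
  with that show ?thesis
    by blast
qed

lemma disc_bellman_mono:
  assumes "is_mdp r p" and "0 \<le> \<gamma>" and "\<And>y. u y \<le> v y"
  shows "disc_bellman r p \<gamma> u x \<le> disc_bellman r p \<gamma> v x"
  unfolding disc_bellman_le_iff
proof
  fix a
  have "(\<Sum>y\<in>UNIV. p x a y * u y) \<le> (\<Sum>y\<in>UNIV. p x a y * v y)"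
    using assms(1,3) unfolding is_mdp_def by (intro sum_mono mult_left_mono) auto
  then have "r x a + \<gamma> * (\<Sum>y\<in>UNIV. p x a y * u y) \<le> r x a + \<gamma> * (\<Sum>y\<in>UNIV. p x a y * v y)"
    using assms(2) by (simp add: mult_left_mono)
  also have "\<dots> \<le> disc_bellman r p \<gamma> v x"
    by (rule disc_bellman_ge)
  finally show "r x a + \<gamma> * (\<Sum>y\<in>UNIV. p x a y * u y) \<le> disc_bellman r p \<gamma> v x" .
qed

lemma disc_bellman_le_bound:
  assumes "is_mdp r p" and "0 \<le> \<gamma>" and "\<gamma> < 1" and "\<And>y. v y \<le> 1 / (1 - \<gamma>)"
  shows "disc_bellman r p \<gamma> v x \<le> 1 / (1 - \<gamma>)"
  unfolding disc_bellman_le_iff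
proof
  fix a
  have "(\<Sum>y\<in>UNIV. p x a y * v y) \<le> 1 / (1 - \<gamma>)"
    using assms(1,4) unfolding is_mdp_def by (intro sum_prob_mult_le) auto
  then have "\<gamma> * (\<Sum>y\<in>UNIV. p x a y * v y) \<le> \<gamma> * (1 / (1 - \<gamma>))"
    using assms(2) by (rule mult_left_mono)
  moreover have "1 + \<gamma> * (1 / (1 - \<gamma>)) = 1 / (1 - \<gamma>)"
    using assms(3) by (simp add: field_simps)
  moreover have "r x a \<le> 1"
    using assms(1) unfolding is_mdp_def by auto
  ultimately show "r x a + \<gamma> * (\<Sum>y\<in>UNIV. p x a y * v y) \<le> 1 / (1 - \<gamma>)"
    by linarith
qed

lemma disc_bellman_iterates:
  assumes mdp: "is_mdp r p" and "0 \<le> \<gamma>" and "\<gamma> < 1"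
  shows "(disc_bellman r p \<gamma> ^^ n) (\<lambda>_. 0) x \<le> (disc_bellman r p \<gamma> ^^ Suc n) (\<lambda>_. 0) x"
    and "(disc_bellman r p \<gamma> ^^ n) (\<lambda>_. 0) x \<le> 1 / (1 - \<gamma>)"
proof -
  show "(disc_bellman r p \<gamma> ^^ n) (\<lambda>_. 0) x \<le> (disc_bellman r p \<gamma> ^^ Suc n) (\<lambda>_. 0) x"
  proof (induction n arbitrary: x)
    case 0
    have "0 \<le> r x undefined"
      using mdp unfolding is_mdp_def by auto
    then show ?case
      using disc_bellman_ge[of r x undefined \<gamma> p "\<lambda>_. 0"] by simp
  next
    case (Suc n)
    show ?case
      using disc_bellman_mono[OF mdp \<open>0 \<le> \<gamma>\<close> Suc.IH] by simp
  qed
  show "(disc_bellman r p \<gamma> ^^ n) (\<lambda>_. 0) x \<le> 1 / (1 - \<gamma>)"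
    using assms by (induction n arbitrary: x) (simp_all add: disc_bellman_le_bound)
qed

text \<open>Value iteration from \<open>0\<close> is increasing and bounded; its limit is a fixed point.\<close>

lemma disc_bellman_fixed_point:
  assumes mdp: "is_mdp r p" and "0 \<le> \<gamma>" and "\<gamma> < 1"
  obtains V where "disc_bellman r p \<gamma> V = V" and "\<And>x. 0 \<le> V x" and "\<And>x. V x \<le> 1 / (1 - \<gamma>)"
proof -
  define T where "T = disc_bellman r p \<gamma>"
  define vi where "vi n = (T ^^ n) (\<lambda>_. 0)" for n
  have vi_Suc: "vi (Suc n) = T (vi n)" for n
    unfolding vi_def by simp
  have inc: "vi n x \<le> vi (Suc n) x" and bounded: "vi n x \<le> 1 / (1 - \<gamma>)" for n x
    unfolding vi_def T_def using disc_bellman_iterates[OF assms] by blast+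
  define V where "V x = (SUP n. vi n x)" for x
  have bdd: "bdd_above (range (\<lambda>n. vi n x))" for x
    using bounded by (intro bdd_aboveI) auto
  have lim: "(\<lambda>n. vi n x) \<longlonglongrightarrow> V x" for x
    unfolding V_def by (rule LIMSEQ_incseq_SUP[OF bdd]) (simp add: incseq_SucI inc)
  have vi_le_V: "vi n x \<le> V x" for n x
    unfolding V_def by (rule cSUP_upper[OF _ bdd]) simp
  have "T V x \<le> V x" for x
    unfolding T_def disc_bellman_le_iff
  proof
    fix a
    show "r x a + \<gamma> * (\<Sum>y\<in>UNIV. p x a y * V y) \<le> V x"
    proof (rule LIMSEQ_le_const2)
      show "(\<lambda>n. r x a + \<gamma> * (\<Sum>y\<in>UNIV. p x a y * vi n y)) \<longlonglongrightarrow> r x a + \<gamma> * (\<Sum>y\<in>UNIV. p x a y * V y)"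
        by (intro tendsto_intros lim)
      have "r x a + \<gamma> * (\<Sum>y\<in>UNIV. p x a y * vi n y) \<le> V x" for n
        using disc_bellman_ge[of r x a \<gamma> p "vi n"] vi_le_V[of "Suc n" x] by (simp add: vi_Suc T_def)
      then show "\<exists>N. \<forall>n\<ge>N. r x a + \<gamma> * (\<Sum>y\<in>UNIV. p x a y * vi n y) \<le> V x"
        by blast
    qed
  qed
  moreover have "V x \<le> T V x" for x
  proof (rule LIMSEQ_le_const2)
    show "(\<lambda>n. vi (Suc n) x) \<longlonglongrightarrow> V x"
      using lim by (rule LIMSEQ_Suc)
    show "\<exists>N. \<forall>n\<ge>N. vi (Suc n) x \<le> T V x"
      unfolding vi_Suc T_def using mdp \<open>0 \<le> \<gamma>\<close> vi_le_V by (blast intro: disc_bellman_mono)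
  qed
  moreover have "0 \<le> V x" for x
    using vi_le_V[of 0 x] by (simp add: vi_def)
  moreover have "V x \<le> 1 / (1 - \<gamma>)" for x
    unfolding V_def using bounded by (intro cSUP_least) auto
  ultimately show ?thesis
    using that[of V] unfolding T_def by (meson antisym ext)
qed

lemma disc_bellman_fixed_superharmonic:
  assumes "is_mdp r p" and "disc_bellman r p \<gamma> V = V"
  shows "\<gamma> * (\<Sum>y\<in>UNIV. p x a y * V y) \<le> V x"
proof -
  have "0 \<le> r x a"
    using assms(1) unfolding is_mdp_def by auto
  then show ?thesis
    using disc_bellman_ge[of r x a \<gamma> p V] assms(2) by simp
qed

section \<open>Discounted values have span at most the diameter\<close>

definition surv_prob :: "('s::finite \<Rightarrow> 'a \<Rightarrow> 's \<Rightarrow> real) \<Rightarrow> ('s \<Rightarrow> 'a) \<Rightarrow> 's \<Rightarrow> 's \<Rightarrow> nat \<Rightarrow> real" where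
  "surv_prob p pol s s' k = (\<Sum>x\<in>UNIV. survive p pol s s' k x)"

lemma survive_nonneg: "is_mdp r p \<Longrightarrow> 0 \<le> survive p pol s s' k x"
  by (induction k arbitrary: x) (auto simp: is_mdp_def intro!: sum_nonneg mult_nonneg_nonneg)

lemma surv_prob_nonneg: "is_mdp r p \<Longrightarrow> 0 \<le> surv_prob p pol s s' k"
  unfolding surv_prob_def by (intro sum_nonneg survive_nonneg)

lemma surv_prob_0:
  assumes "s \<noteq> s'"
  shows "surv_prob p pol s s' 0 = 1"
proof -
  have "survive p pol s s' 0 = (\<lambda>x. if x = s then 1 else 0)"
    using assms by auto
  then show ?thesis
    unfolding surv_prob_def by simp
qed

lemma sum_survive_Suc:
  "(\<Sum>y\<in>UNIV. survive p pol s s' (Suc k) y * f y)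
     = (\<Sum>y\<in>UNIV. (\<Sum>x\<in>UNIV. survive p pol s s' k x * p x (pol x) y) * f y)
       - (\<Sum>x\<in>UNIV. survive p pol s s' k x * p x (pol x) s') * f s'"
proof -
  define W where "W y = (\<Sum>x\<in>UNIV. survive p pol s s' k x * p x (pol x) y) * f y" for y
  have "(\<Sum>y\<in>UNIV. survive p pol s s' (Suc k) y * f y) = (\<Sum>y\<in>UNIV. W y - (if y = s' then W y else 0))"
    unfolding W_def by (intro sum.cong) auto
  then show ?thesis
    by (simp add: sum_subtractf W_def)
qed

text \<open>\<open>\<Sum>x. survive p pol s s' k x * p x (pol x) s'\<close> is the probability of hitting \<open>s'\<close> at
  time \<open>k + 1\<close>.\<close>

lemma surv_prob_Suc:
  assumes "is_mdp r p"
  shows "surv_prob p pol s s' (Suc k)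
    = surv_prob p pol s s' k - (\<Sum>x\<in>UNIV. survive p pol s s' k x * p x (pol x) s')"
proof -
  have "(\<Sum>y\<in>UNIV. \<Sum>x\<in>UNIV. survive p pol s s' k x * p x (pol x) y)
      = (\<Sum>x\<in>UNIV. survive p pol s s' k x * (\<Sum>y\<in>UNIV. p x (pol x) y))"
    by (subst sum.swap) (simp add: sum_distrib_left)
  also have "\<dots> = surv_prob p pol s s' k"
    using assms unfolding is_mdp_def surv_prob_def by simp
  finally show ?thesis
    using sum_survive_Suc[of p pol s s' k "\<lambda>_. 1"] unfolding surv_prob_def by simp
qed

lemma surv_prob_le_1:
  assumes "is_mdp r p" and "s \<noteq> s'"
  shows "surv_prob p pol s s' k \<le> 1"
proof (induction k)
  case (Suc k)
  have "0 \<le> (\<Sum>x\<in>UNIV. survive p pol s s' k x * p x (pol x) s')"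
    using assms(1) unfolding is_mdp_def by (intro sum_nonneg mult_nonneg_nonneg survive_nonneg[OF assms(1)]) auto
  with Suc show ?case
    using surv_prob_Suc[OF assms(1)] by simp
qed (simp add: surv_prob_0[OF assms(2)])

lemma sum_surv_prob_le_exp_hit_time:
  assumes "is_mdp r p" and "exp_hit_time p pol s s' \<le> ennreal E" and "0 \<le> E"
  shows "(\<Sum>k<n. surv_prob p pol s s' k) \<le> E"
proof -
  have "ennreal (\<Sum>k<n. surv_prob p pol s s' k) = (\<Sum>k<n. ennreal (surv_prob p pol s s' k))"
    using surv_prob_nonneg[OF assms(1)] by (simp add: sum_ennreal)
  also have "\<dots> \<le> (\<Sum>k. ennreal (surv_prob p pol s s' k))"
    by (rule sum_le_suminf) auto
  also have "\<dots> \<le> ennreal E"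
    using assms(2) unfolding exp_hit_time_def surv_prob_def .
  finally show ?thesis
    using assms(3) by simp
qed

text \<open>One step of the chain stopped at \<open>s'\<close>: a \<open>\<gamma>\<close>-superharmonic \<open>V\<close> loses, in expectation, at
  most a factor \<open>\<gamma>\<close>, counting the mass absorbed at \<open>s'\<close> with value \<open>V s'\<close>.\<close>

lemma survive_superharmonic_step:
  assumes "is_mdp r p" and "0 \<le> \<gamma>" and super: "\<And>x. \<gamma> * (\<Sum>y\<in>UNIV. p x (pol x) y * V y) \<le> V x"
  shows "\<gamma> * ((\<Sum>x\<in>UNIV. survive p pol s s' (Suc k) x * V x)
      + (surv_prob p pol s s' k - surv_prob p pol s s' (Suc k)) * V s')
    \<le> (\<Sum>x\<in>UNIV. survive p pol s s' k x * V x)"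
proof -
  have "\<gamma> * ((\<Sum>x\<in>UNIV. survive p pol s s' (Suc k) x * V x)
      + (surv_prob p pol s s' k - surv_prob p pol s s' (Suc k)) * V s')
      = \<gamma> * (\<Sum>y\<in>UNIV. (\<Sum>x\<in>UNIV. survive p pol s s' k x * p x (pol x) y) * V y)"
    unfolding sum_survive_Suc surv_prob_Suc[OF assms(1)] by simp
  also have "\<dots> = \<gamma> * (\<Sum>y\<in>UNIV. \<Sum>x\<in>UNIV. survive p pol s s' k x * p x (pol x) y * V y)"
    by (simp add: sum_distrib_right)
  also have "\<dots> = \<gamma> * (\<Sum>x\<in>UNIV. \<Sum>y\<in>UNIV. survive p pol s s' k x * p x (pol x) y * V y)"
    by (subst sum.swap) (rule refl)
  also have "\<dots> = (\<Sum>x\<in>UNIV. survive p pol s s' k x * (\<gamma> * (\<Sum>y\<in>UNIV. p x (pol x) y * V y)))"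
    by (simp add: sum_distrib_left mult_ac)
  also have "\<dots> \<le> (\<Sum>x\<in>UNIV. survive p pol s s' k x * V x)"
    by (intro sum_mono mult_left_mono super survive_nonneg[OF assms(1)])
  finally show ?thesis .
qed

lemma survive_superharmonic_bound:
  assumes "is_mdp r p" and "0 \<le> \<gamma>" and super: "\<And>x. \<gamma> * (\<Sum>y\<in>UNIV. p x (pol x) y * V y) \<le> V x"
    and "s \<noteq> s'"
  shows "V s' * (\<Sum>k<n. \<gamma> ^ Suc k * (surv_prob p pol s s' k - surv_prob p pol s s' (Suc k)))
      + \<gamma> ^ n * (\<Sum>x\<in>UNIV. survive p pol s s' n x * V x) \<le> V s"
proof (induction n)
  case 0
  have "(\<Sum>x\<in>UNIV. survive p pol s s' 0 x * V x) = (\<Sum>x\<in>UNIV. if x = s then V x else 0)"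
    using assms(4) by (intro sum.cong) auto
  then show ?case
    by simp
next
  case (Suc n)
  have "\<gamma> ^ n * (\<gamma> * ((\<Sum>x\<in>UNIV. survive p pol s s' (Suc n) x * V x)
      + (surv_prob p pol s s' n - surv_prob p pol s s' (Suc n)) * V s'))
      \<le> \<gamma> ^ n * (\<Sum>x\<in>UNIV. survive p pol s s' n x * V x)"
    using survive_superharmonic_step[OF assms(1-3)] assms(2) by (intro mult_left_mono) simp_all
  with Suc show ?case
    by (simp add: algebra_simps)
qed

lemma sum_discounted_decrements:
  fixes S :: "nat \<Rightarrow> real"
  assumes "S 0 = 1"
  shows "(\<Sum>k<n. \<gamma> ^ Suc k * (S k - S (Suc k))) = 1 - (1 - \<gamma>) * (\<Sum>k<n. \<gamma> ^ k * S k) - \<gamma> ^ n * S n"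
  using assms by (induction n) (simp_all add: algebra_simps)

text \<open>Starting in \<open>s\<close> and following \<open>pol\<close> until \<open>s'\<close> is hit at time \<open>\<tau>\<close>, superharmonicity gives
  \<open>V s \<ge> V s' * E[\<gamma>^\<tau>] \<ge> V s' - (1 - \<gamma>) * V s' * E[\<tau>]\<close>, and \<open>(1 - \<gamma>) * V s' \<le> 1\<close>.\<close>

lemma discounted_value_span_le_exp_hit_time:
  assumes mdp: "is_mdp r p" and "0 \<le> \<gamma>" and "\<gamma> < 1"
    and V_nonneg: "\<And>x. 0 \<le> V x" and V_le: "\<And>x. V x \<le> 1 / (1 - \<gamma>)"
    and super: "\<And>x. \<gamma> * (\<Sum>y\<in>UNIV. p x (pol x) y * V y) \<le> V x"
    and "s \<noteq> s'" and "exp_hit_time p pol s s' \<le> ennreal E" and "0 \<le> E"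
  shows "V s' - V s \<le> E"
proof (rule LIMSEQ_le_const)
  define S where "S = surv_prob p pol s s'"
  have S: "0 \<le> S k" "S k \<le> 1" for k
    unfolding S_def using surv_prob_nonneg[OF mdp] surv_prob_le_1[OF mdp \<open>s \<noteq> s'\<close>] by auto
  have "(\<lambda>n. E + \<gamma> ^ n / (1 - \<gamma>)) \<longlonglongrightarrow> E + 0 / (1 - \<gamma>)"
    using assms(2,3) by (intro tendsto_intros LIMSEQ_power_zero) auto
  then show "(\<lambda>n. E + \<gamma> ^ n / (1 - \<gamma>)) \<longlonglongrightarrow> E"
    by simp
  have "V s' - V s \<le> E + \<gamma> ^ n / (1 - \<gamma>)" for n
  proof -
    define A where "A = (\<Sum>k<n. \<gamma> ^ Suc k * (S k - S (Suc k)))"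
    have "0 \<le> \<gamma> ^ n * (\<Sum>x\<in>UNIV. survive p pol s s' n x * V x)"
      using assms(2) V_nonneg survive_nonneg[OF mdp] by (intro mult_nonneg_nonneg sum_nonneg) auto
    then have "V s' * A \<le> V s"
      using survive_superharmonic_bound[OF mdp \<open>0 \<le> \<gamma>\<close> super \<open>s \<noteq> s'\<close>, of n]
      unfolding A_def S_def by linarith
    moreover have "A = 1 - (1 - \<gamma>) * (\<Sum>k<n. \<gamma> ^ k * S k) - \<gamma> ^ n * S n"
      unfolding A_def by (rule sum_discounted_decrements) (simp add: S_def surv_prob_0[OF \<open>s \<noteq> s'\<close>])
    then have "V s' * A = V s' - V s' * (1 - \<gamma>) * (\<Sum>k<n. \<gamma> ^ k * S k) - V s' * (\<gamma> ^ n * S n)"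
      by (simp add: right_diff_distrib mult.assoc)
    ultimately have "V s' - V s \<le> V s' * (1 - \<gamma>) * (\<Sum>k<n. \<gamma> ^ k * S k) + V s' * (\<gamma> ^ n * S n)"
      by linarith
    also have "V s' * (1 - \<gamma>) * (\<Sum>k<n. \<gamma> ^ k * S k) \<le> 1 * (\<Sum>k<n. S k)"
      using V_le[of s'] assms(2,3) S
      by (intro mult_mono sum_mono mult_left_le_one_le sum_nonneg mult_nonneg_nonneg power_le_one)
        (auto simp: field_simps)
    also have "V s' * (\<gamma> ^ n * S n) \<le> 1 / (1 - \<gamma>) * (\<gamma> ^ n * 1)"
      using V_le[of s'] assms(2,3) S by (intro mult_mono mult_left_mono) auto
    also have "(\<Sum>k<n. S k) \<le> E"
      unfolding S_def by (rule sum_surv_prob_le_exp_hit_time[OF mdp assms(8,9)])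
    finally show ?thesis
      by simp
  qed
  then show "\<exists>N. \<forall>n\<ge>N. V s' - V s \<le> E + \<gamma> ^ n / (1 - \<gamma>)"
    by blast
qed

lemma discounted_value_span_le_diameter:
  assumes mdp: "is_mdp r p" and "0 \<le> \<gamma>" and "\<gamma> < 1"
    and "\<And>x. 0 \<le> V x" and "\<And>x. V x \<le> 1 / (1 - \<gamma>)"
    and super: "\<And>x a. \<gamma> * (\<Sum>y\<in>UNIV. p x a y * V y) \<le> V x"
    and diam: "diameter p \<le> ennreal D" and "0 \<le> D"
  shows "V s' - V s \<le> D"
proof (cases "s = s'")
  case False
  have "(INF pol. exp_hit_time p pol s s') \<le> diameter p"
    unfolding diameter_def using False by (intro SUP_upper2[where i = "(s, s')"]) auto
  also note diam
  finally have hit: "(INF pol. exp_hit_time p pol s s') \<le> ennreal D" .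
  show ?thesis
  proof (rule field_le_epsilon)
    fix e :: real assume "0 < e"
    with hit \<open>0 \<le> D\<close> have "(INF pol. exp_hit_time p pol s s') < ennreal (D + e)"
      by (simp add: le_less_trans ennreal_less_iff)
    then obtain pol where "exp_hit_time p pol s s' \<le> ennreal (D + e)"
      unfolding INF_less_iff by (blast intro: less_imp_le)
    then show "V s' - V s \<le> D + e"
      using \<open>0 < e\<close> \<open>0 \<le> D\<close> by (intro discounted_value_span_le_exp_hit_time[OF mdp assms(2-5) super False]) auto
  qed
qed (simp add: \<open>0 \<le> D\<close>)

section \<open>Perturbation of the optimal average reward\<close>

text \<open>Only the span of \<open>V\<close> matters against a signed measure of total mass \<open>0\<close>.\<close>

lemma sum_diff_mult_le_span:
  fixes V :: "'s::finite \<Rightarrow> real"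
  assumes "(\<Sum>y\<in>UNIV. q2 y) = (\<Sum>y\<in>UNIV. q1 y)" and span: "\<And>y z. V y - V z \<le> D"
  shows "(\<Sum>y\<in>UNIV. (q2 y - q1 y) * V y) \<le> D * (\<Sum>y\<in>UNIV. \<bar>q2 y - q1 y\<bar>)"
proof -
  obtain z where z: "\<And>y. V z \<le> V y"
    using ex_min_if_finite[of "range V"] by (auto simp: not_less)
  have "(\<Sum>y\<in>UNIV. (q2 y - q1 y) * V y) = (\<Sum>y\<in>UNIV. (q2 y - q1 y) * (V y - V z) + (q2 y - q1 y) * V z)"
    by (rule sum.cong) (simp_all add: algebra_simps)
  also have "\<dots> = (\<Sum>y\<in>UNIV. (q2 y - q1 y) * (V y - V z)) + (\<Sum>y\<in>UNIV. q2 y - q1 y) * V z"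
    by (simp add: sum.distrib sum_distrib_right)
  also have "\<dots> = (\<Sum>y\<in>UNIV. (q2 y - q1 y) * (V y - V z))"
    using assms(1) by (simp add: sum_subtractf)
  also have "\<dots> \<le> (\<Sum>y\<in>UNIV. \<bar>q2 y - q1 y\<bar> * D)"
  proof (rule sum_mono)
    fix y
    have "(q2 y - q1 y) * (V y - V z) \<le> \<bar>q2 y - q1 y\<bar> * (V y - V z)"
      using z[of y] by (intro mult_right_mono) auto
    also have "\<dots> \<le> \<bar>q2 y - q1 y\<bar> * D"
      using span[of y z] by (intro mult_left_mono) auto
    finally show "(q2 y - q1 y) * (V y - V z) \<le> \<bar>q2 y - q1 y\<bar> * D" .
  qed
  also have "\<dots> = D * (\<Sum>y\<in>UNIV. \<bar>q2 y - q1 y\<bar>)"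
    by (simp add: sum_distrib_left mult.commute)
  finally show ?thesis .
qed

lemma discounted_value_le_opt_avg_reward:
  assumes mdp: "is_mdp r p" and "\<gamma> < 1" and fixed: "disc_bellman r p \<gamma> V = V"
    and span: "\<And>y z. V y - V z \<le> D"
  shows "(1 - \<gamma>) * V y \<le> opt_avg_reward r p s + (1 - \<gamma>) * D"
proof -
  have "\<forall>x. \<exists>a. V x = r x a + \<gamma> * (\<Sum>y\<in>UNIV. p x a y * V y)"
    using disc_bellman_attained[of r p \<gamma> V] fixed by metis
  then obtain pol where pol: "\<And>x. V x = r x (pol x) + \<gamma> * (\<Sum>y\<in>UNIV. p x (pol x) y * V y)"
    by metis
  obtain z where z: "\<And>y. V z \<le> V y"
    using ex_min_if_finite[of "range V"] by (auto simp: not_less)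
  have "V x + (1 - \<gamma>) * V z \<le> r x (pol x) + (\<Sum>y\<in>UNIV. p x (pol x) y * V y)" for x
  proof -
    have "V z \<le> (\<Sum>y\<in>UNIV. p x (pol x) y * V y)"
      using mdp z unfolding is_mdp_def by (intro sum_prob_mult_ge) auto
    then have "(1 - \<gamma>) * V z \<le> (1 - \<gamma>) * (\<Sum>y\<in>UNIV. p x (pol x) y * V y)"
      using \<open>\<gamma> < 1\<close> by (intro mult_left_mono) auto
    then show ?thesis
      using pol[of x] by (simp add: algebra_simps)
  qed
  then have "(1 - \<gamma>) * V z \<le> avg_reward r p s pol"
    by (rule avg_reward_ge_of_bellman_ineq[OF mdp])
  also have "\<dots> \<le> opt_avg_reward r p s"
    unfolding opt_avg_reward_def by (rule Max_ge) auto
  finally have "(1 - \<gamma>) * V z \<le> opt_avg_reward r p s" .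
  moreover have "(1 - \<gamma>) * V y \<le> (1 - \<gamma>) * (V z + D)"
    using span[of y z] \<open>\<gamma> < 1\<close> by (intro mult_left_mono) auto
  ultimately show ?thesis
    by (simp add: distrib_left)
qed

lemma bellman_ineq_perturbed:
  assumes m1: "is_mdp r1 p1" and m2: "is_mdp r2 p2" and "0 \<le> \<gamma>" and "\<gamma> < 1"
    and fixed: "disc_bellman r1 p1 \<gamma> V = V" and span: "\<And>y z. V y - V z \<le> D"
    and er: "\<bar>r2 x a - r1 x a\<bar> \<le> er" and ep: "(\<Sum>y\<in>UNIV. \<bar>p2 x a y - p1 x a y\<bar>) \<le> ep"
  shows "r2 x a + (\<Sum>y\<in>UNIV. p2 x a y * V y) \<le> V x + (opt_avg_reward r1 p1 s + (1 - \<gamma>) * D + er + D * ep)"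
proof -
  have "0 \<le> D"
    using span[of x x] by simp
  have "(\<Sum>y\<in>UNIV. (p2 x a y - p1 x a y) * V y) \<le> D * (\<Sum>y\<in>UNIV. \<bar>p2 x a y - p1 x a y\<bar>)"
    using m1 m2 span unfolding is_mdp_def by (intro sum_diff_mult_le_span) auto
  also have "\<dots> \<le> D * ep"
    using ep \<open>0 \<le> D\<close> by (rule mult_left_mono)
  finally have "(\<Sum>y\<in>UNIV. p2 x a y * V y) \<le> (\<Sum>y\<in>UNIV. p1 x a y * V y) + D * ep"
    by (simp add: left_diff_distrib sum_subtractf)
  moreover have "r1 x a + \<gamma> * (\<Sum>y\<in>UNIV. p1 x a y * V y) \<le> V x"
    using disc_bellman_ge[of r1 x a \<gamma> p1 V] fixed by simp
  moreover have "(1 - \<gamma>) * (\<Sum>y\<in>UNIV. p1 x a y * V y) \<le> opt_avg_reward r1 p1 s + (1 - \<gamma>) * D"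
  proof -
    have "(\<Sum>y\<in>UNIV. p1 x a y * ((1 - \<gamma>) * V y)) \<le> opt_avg_reward r1 p1 s + (1 - \<gamma>) * D"
      using m1 discounted_value_le_opt_avg_reward[OF m1 \<open>\<gamma> < 1\<close> fixed span]
      unfolding is_mdp_def by (intro sum_prob_mult_le) auto
    then show ?thesis
      by (simp add: sum_distrib_left mult_ac)
  qed
  ultimately show ?thesis
    using er by (simp add: algebra_simps)
qed

lemma opt_avg_reward_le_perturbed:
  assumes m1: "is_mdp r1 p1" and m2: "is_mdp r2 p2"
    and diam: "diameter p1 \<le> ennreal D" and "0 \<le> D"
    and er: "\<And>x a. \<bar>r2 x a - r1 x a\<bar> \<le> er"
    and ep: "\<And>x a. (\<Sum>y\<in>UNIV. \<bar>p2 x a y - p1 x a y\<bar>) \<le> ep"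
  shows "opt_avg_reward r2 p2 s \<le> opt_avg_reward r1 p1 s + er + D * ep"
  unfolding opt_avg_reward_def[of r2]
proof (rule Max.boundedI)
  fix \<rho> assume "\<rho> \<in> range (avg_reward r2 p2 s)"
  then obtain pol where \<rho>: "\<rho> = avg_reward r2 p2 s pol"
    by blast
  show "\<rho> \<le> opt_avg_reward r1 p1 s + er + D * ep"
  proof (rule field_le_epsilon)
    fix e :: real assume "0 < e"
    define \<gamma> where "\<gamma> = D / (D + e)"
    have "0 \<le> \<gamma>" and "\<gamma> < 1"
      unfolding \<gamma>_def using \<open>0 \<le> D\<close> \<open>0 < e\<close> by auto
    have "(1 - \<gamma>) * D = e * \<gamma>"
      unfolding \<gamma>_def using \<open>0 \<le> D\<close> \<open>0 < e\<close> by (simp add: field_simps)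
    also have "\<dots> \<le> e"
      using \<open>0 < e\<close> \<open>\<gamma> < 1\<close> by simp
    finally have gap: "(1 - \<gamma>) * D \<le> e" .
    obtain V where fixed: "disc_bellman r1 p1 \<gamma> V = V"
      and V_bounds: "\<And>x. 0 \<le> V x" "\<And>x. V x \<le> 1 / (1 - \<gamma>)"
      using disc_bellman_fixed_point[OF m1 \<open>0 \<le> \<gamma>\<close> \<open>\<gamma> < 1\<close>] by blast
    have span: "V y - V z \<le> D" for y z
      using disc_bellman_fixed_superharmonic[OF m1 fixed] V_bounds
      by (intro discounted_value_span_le_diameter[OF m1 \<open>0 \<le> \<gamma>\<close> \<open>\<gamma> < 1\<close> _ _ _ diam \<open>0 \<le> D\<close>])
    have "avg_reward r2 p2 s pol \<le> opt_avg_reward r1 p1 s + (1 - \<gamma>) * D + er + D * ep"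
      using bellman_ineq_perturbed[OF m1 m2 \<open>0 \<le> \<gamma>\<close> \<open>\<gamma> < 1\<close> fixed span er ep]
      by (intro avg_reward_le_of_bellman_ineq[where V = V, OF m2])
    with gap show "\<rho> \<le> opt_avg_reward r1 p1 s + er + D * ep + e"
      unfolding \<rho> by linarith
  qed
qed auto

section \<open>The variation bound\<close>

lemma one_le_diameter:
  fixes p :: "'s::finite \<Rightarrow> 'a::finite \<Rightarrow> 's \<Rightarrow> real" and s s' :: 's
  assumes "s \<noteq> s'"
  shows "1 \<le> diameter p"
proof -
  have "1 \<le> exp_hit_time p pol s s'" for pol
  proof -
    have "(\<Sum>k\<in>{0}. ennreal (surv_prob p pol s s' k)) \<le> (\<Sum>k. ennreal (surv_prob p pol s s' k))"
      by (rule sum_le_suminf) auto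
    then show ?thesis
      unfolding exp_hit_time_def surv_prob_def[symmetric] by (simp add: surv_prob_0[OF assms])
  qed
  then have "1 \<le> (INF pol. exp_hit_time p pol s s')"
    by (rule INF_greatest)
  also have "\<dots> \<le> diameter p"
    unfolding diameter_def using assms by (intro SUP_upper2[where i = "(s, s')"]) auto
  finally show ?thesis .
qed

lemma Max_range_ge: "f x \<le> Max (range (f :: 'a::finite \<Rightarrow> real))"
  by (rule Max_ge) auto

lemma abs_opt_avg_reward_diff_le:
  fixes r1 r2 :: "'s::finite \<Rightarrow> 'a::finite \<Rightarrow> real" and p1 p2 :: "'s \<Rightarrow> 'a \<Rightarrow> 's \<Rightarrow> real"
  assumes m1: "is_mdp r1 p1" and m2: "is_mdp r2 p2"
    and d1: "diameter p1 \<le> ennreal D" and d2: "diameter p2 \<le> ennreal D"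
  shows "\<bar>opt_avg_reward r2 p2 s - opt_avg_reward r1 p1 s\<bar>
    \<le> Max (range (\<lambda>(x, a). \<bar>r2 x a - r1 x a\<bar>)) + D * Max (range (\<lambda>(x, a). \<Sum>y\<in>UNIV. \<bar>p2 x a y - p1 x a y\<bar>))"
    (is "_ \<le> ?er + D * ?ep")
proof -
  have er: "\<bar>r2 x a - r1 x a\<bar> \<le> ?er" "\<bar>r1 x a - r2 x a\<bar> \<le> ?er" for x a
    using Max_range_ge[of "\<lambda>(x, a). \<bar>r2 x a - r1 x a\<bar>" "(x, a)"] by (simp_all add: abs_minus_commute)
  have ep: "(\<Sum>y\<in>UNIV. \<bar>p2 x a y - p1 x a y\<bar>) \<le> ?ep" "(\<Sum>y\<in>UNIV. \<bar>p1 x a y - p2 x a y\<bar>) \<le> ?ep" for x a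
    using Max_range_ge[of "\<lambda>(x, a). \<Sum>y\<in>UNIV. \<bar>p2 x a y - p1 x a y\<bar>" "(x, a)"] by (simp_all add: abs_minus_commute)
  show ?thesis
  proof (cases "0 \<le> D")
    case True
    show ?thesis
      using opt_avg_reward_le_perturbed[OF m1 m2 d1 True er(1) ep(1), of s]
        opt_avg_reward_le_perturbed[OF m2 m1 d2 True er(2) ep(2), of s] by linarith
  next
    case False
    (* A negative bound on the diameter forces a single state, where all kernels coincide. *)
    then have "diameter p1 \<le> 0"
      using d1 by (simp add: ennreal_neg)
    then have single: "x = y" for x y :: 's
      using one_le_diameter[of x y p1] by (auto simp: order.trans)
    then have UNIV_eq: "UNIV = {x}" for x :: 's
      by auto
    have "p1 x a x = 1" "p2 x a x = 1" for x a
      using m1 m2 unfolding is_mdp_def UNIV_eq[of x] by auto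
    then have "(\<Sum>y\<in>UNIV. \<bar>p2 x a y - p1 x a y\<bar>) = 0" for x a
      unfolding UNIV_eq[of x] by simp
    then have "?ep = 0"
      by simp
    moreover have "diameter p1 \<le> ennreal 0" "diameter p2 \<le> ennreal 0"
      using d1 d2 False by (simp_all add: ennreal_neg)
    ultimately show ?thesis
      using opt_avg_reward_le_perturbed[of r1 p1 r2 p2 0, OF m1 m2 _ _ er(1) ep(1), of s]
        opt_avg_reward_le_perturbed[of r2 p2 r1 p1 0, OF m2 m1 _ _ er(2) ep(2), of s] by simp
  qed
qed

theorem theorem1:
  fixes r :: "nat \<Rightarrow> 's::finite \<Rightarrow> 'a::finite \<Rightarrow> real"
    and p :: "nat \<Rightarrow> 's \<Rightarrow> 'a \<Rightarrow> 's \<Rightarrow> real"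
    and s1 :: 's and T :: nat and D :: real
  assumes mdp: "\<And>t. t \<in> {1..T} \<Longrightarrow> is_mdp (r t) (p t)"
    and comm: "\<And>t. t \<in> {1..T} \<Longrightarrow> communicating (p t)"
    and diam: "\<And>t. t \<in> {1..T} \<Longrightarrow> diameter (p t) \<le> ennreal D"
  shows "(\<Sum>t\<in>{1..T-1}. \<bar>opt_avg_reward (r (t+1)) (p (t+1)) s1 - opt_avg_reward (r t) (p t) s1\<bar>)
    \<le> (\<Sum>t\<in>{1..T-1}. Max (range (\<lambda>(s, a). \<bar>r (t+1) s a - r t s a\<bar>)))
       + D * (\<Sum>t\<in>{1..T-1}. Max (range (\<lambda>(s, a). \<Sum>x\<in>UNIV. \<bar>p (t+1) s a x - p t s a x\<bar>)))"
proof -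
  have "(\<Sum>t\<in>{1..T-1}. \<bar>opt_avg_reward (r (t+1)) (p (t+1)) s1 - opt_avg_reward (r t) (p t) s1\<bar>)
      \<le> (\<Sum>t\<in>{1..T-1}. Max (range (\<lambda>(s, a). \<bar>r (t+1) s a - r t s a\<bar>))
          + D * Max (range (\<lambda>(s, a). \<Sum>x\<in>UNIV. \<bar>p (t+1) s a x - p t s a x\<bar>)))"
    by (intro sum_mono abs_opt_avg_reward_diff_le mdp diam) auto
  then show ?thesis
    by (simp add: sum.distrib sum_distrib_left)
qed

end
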